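(* Let $\mathcal A$ be a dual Banach algebra with predual $\mathcal A_*$. For $T\in\mathcal B(\mathcal A,\mathcal A')=(\mathcal A\hat\otimes\mathcal A)'$ define bounded maps $\phi_r,\phi_l:\mathcal A\hat\otimes\mathcal A\to\mathcal A'$ by $\phi_r(a\otimes b)=T'(\kappa_{\mathcal A}(a))\cdot b$ and $\phi_l(a\otimes b)=a\cdot T(b)$. Then $T\in\sigma WC(\mathcal B(\mathcal A,\mathcal A'))$ if and only if $\phi_r$ and $\phi_l$ are weakly compact and have ranges contained in $\kappa_{\mathcal A_*}(\mathcal A_* )$.
   Context: Dual Banach algebra $(\mathcal A,\mathcal A_* )$: $\mathcal A_*\subseteq\mathcal A'$ closed sub-bimodule (actions $\langle a\cdot\mu,b\rangle=\mu(ba)$, $\langle\mu\cdot a,b\rangle=\mu(ab)$) with $\mathcal A\cong(\mathcal A_* )'$ canonically; identify $\mathcal A=(\mathcal A_* )'$, $\mathcal A'=(\mathcal A_* )''$, with $\kappa_{\mathcal A_*}$ the canonical embedding of $\mathcal A_*$ in $\mathcal A'$. $(\mathcal A\hat\otimes\mathcal A)'=\mathcal B(\mathcal A,\mathcal A')$ via $\langle T,a\otimes b\rangle=\langle T(b),a\rangle$, bimodule actions $(a\cdot T)(c)=T(ca)$, $(T\cdot a)(c)=T(c)\cdot a$. $x\in\sigma WC(E)$ iff $a\mapsto a\cdot x$, $a\mapsto x\cdot a$ are $\sigma(\mathcal A,\mathcal A_* )$–$\sigma(E,E')$ continuous. *)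

theory Defs
  imports "HOL-Analysis.Analysis"
begin

definition weak_top :: "('v \<Rightarrow> real) set \<Rightarrow> 'v topology" where
  "weak_top F = topology_generated_by {f -` U | f U. f \<in> F \<and> open U}"

definition weak_top_full :: "'e::real_normed_vector topology" where
  "weak_top_full = weak_top (range (blinfun_apply :: ('e \<Rightarrow>\<^sub>L real) \<Rightarrow> 'e \<Rightarrow> real))"

definition lact_dual :: "'a::real_normed_algebra \<Rightarrow> ('a \<Rightarrow>\<^sub>L real) \<Rightarrow> ('a \<Rightarrow>\<^sub>L real)" where
  "lact_dual a \<mu> = Blinfun (\<lambda>b. \<mu> (b * a))"

definition ract_dual :: "('a \<Rightarrow>\<^sub>L real) \<Rightarrow> 'a::real_normed_algebra \<Rightarrow> ('a \<Rightarrow>\<^sub>L real)" where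
  "ract_dual \<mu> a = Blinfun (\<lambda>b. \<mu> (a * b))"

definition lact_op :: "'a::real_normed_algebra \<Rightarrow> ('a \<Rightarrow>\<^sub>L ('a \<Rightarrow>\<^sub>L real)) \<Rightarrow> ('a \<Rightarrow>\<^sub>L ('a \<Rightarrow>\<^sub>L real))" where
  "lact_op a T = Blinfun (\<lambda>c. T (c * a))"

definition ract_op :: "('a \<Rightarrow>\<^sub>L ('a \<Rightarrow>\<^sub>L real)) \<Rightarrow> 'a::real_normed_algebra \<Rightarrow> ('a \<Rightarrow>\<^sub>L ('a \<Rightarrow>\<^sub>L real))" where
  "ract_op T a = Blinfun (\<lambda>c. ract_dual (T c) a)"

(* Dual Banach algebra: P \<subseteq> A' is a closed sub-bimodule (the predual A_* ) and the
   canonical map A \<rightarrow> (A_* )', a \<mapsto> (\<mu> \<mapsto> \<mu> a), is an isometric isomorphism onto. *)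
definition dual_banach_algebra :: "('a::{real_normed_algebra,banach} \<Rightarrow>\<^sub>L real) set \<Rightarrow> bool" where
  "dual_banach_algebra P \<longleftrightarrow>
     subspace P \<and> closed P \<and>
     (\<forall>a. \<forall>\<mu>\<in>P. lact_dual a \<mu> \<in> P \<and> ract_dual \<mu> a \<in> P) \<and>
     (\<forall>a. norm a = (SUP \<mu>\<in>{\<mu>\<in>P. norm \<mu> \<le> 1}. \<bar>blinfun_apply \<mu> a\<bar>)) \<and>
     (\<forall>\<phi> :: ('a \<Rightarrow>\<^sub>L real) \<Rightarrow> real.
        (\<forall>x\<in>P. \<forall>y\<in>P. \<phi> (x + y) = \<phi> x + \<phi> y) \<and>
        (\<forall>c. \<forall>x\<in>P. \<phi> (c *\<^sub>R x) = c * \<phi> x) \<and>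
        (\<exists>K. \<forall>x\<in>P. \<bar>\<phi> x\<bar> \<le> K * norm x)
        \<longrightarrow> (\<exists>a. \<forall>\<mu>\<in>P. \<phi> \<mu> = blinfun_apply \<mu> a))"

definition weak_star_A :: "('a::real_normed_algebra \<Rightarrow>\<^sub>L real) set \<Rightarrow> 'a topology" where
  "weak_star_A P = weak_top (blinfun_apply ` P)"

definition sigmaWC_op :: "('a::{real_normed_algebra,banach} \<Rightarrow>\<^sub>L real) set \<Rightarrow> ('a \<Rightarrow>\<^sub>L ('a \<Rightarrow>\<^sub>L real)) set" where
  "sigmaWC_op P = {T. continuous_map (weak_star_A P) weak_top_full (\<lambda>a. lact_op a T) \<and>
                      continuous_map (weak_star_A P) weak_top_full (\<lambda>a. ract_op T a)}"

definition kappa :: "'a::real_normed_vector \<Rightarrow> (('a \<Rightarrow>\<^sub>L real) \<Rightarrow>\<^sub>L real)" where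
  "kappa a = Blinfun (\<lambda>\<mu>. blinfun_apply \<mu> a)"

definition adjoint_op :: "('a::real_normed_vector \<Rightarrow>\<^sub>L ('a \<Rightarrow>\<^sub>L real)) \<Rightarrow> (('a \<Rightarrow>\<^sub>L real) \<Rightarrow>\<^sub>L real) \<Rightarrow> ('a \<Rightarrow>\<^sub>L real)" where
  "adjoint_op T \<psi> = \<psi> o\<^sub>L T"

(* phi_r(a \<otimes> b) = T'(kappa a) . b   and   phi_l(a \<otimes> b) = a . T(b),
   given by their (bounded bilinear) values on elementary tensors *)
definition phi_r :: "('a::{real_normed_algebra,banach} \<Rightarrow>\<^sub>L ('a \<Rightarrow>\<^sub>L real)) \<Rightarrow> 'a \<Rightarrow> 'a \<Rightarrow> ('a \<Rightarrow>\<^sub>L real)" where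
  "phi_r T a b = ract_dual (adjoint_op T (kappa a)) b"

definition phi_l :: "('a::{real_normed_algebra,banach} \<Rightarrow>\<^sub>L ('a \<Rightarrow>\<^sub>L real)) \<Rightarrow> 'a \<Rightarrow> 'a \<Rightarrow> ('a \<Rightarrow>\<^sub>L real)" where
  "phi_l T a b = lact_dual a (T b)"

(* Weak compactness of the bounded linear map A \<otimes>^ A \<rightarrow> X induced by a bounded bilinear
   map B: the image of the unit ball of A \<otimes>^ A has weakly compact weak closure.
   The unit ball of A \<otimes>^ A is the norm closure of the absolutely convex hull of
   {a \<otimes> b : |a|,|b| \<le> 1}, so that weak closure equals the weak closure of the
   absolutely convex hull (= convex hull of S \<union> -S, real scalars) of
   S = {B a b : |a|,|b| \<le> 1}. *)
definition weakly_compact_bil :: "('a::real_normed_vector \<Rightarrow> 'a \<Rightarrow> 'x::real_normed_vector) \<Rightarrow> bool" where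
  "weakly_compact_bil B \<longleftrightarrow>
     (let S = {B a b | a b. norm a \<le> 1 \<and> norm b \<le> 1}
      in compactin weak_top_full (weak_top_full closure_of (convex hull (S \<union> uminus ` S))))"

end

theory Submission
  imports Defs
begin

text \<open>
  Let \<open>L\<close> be one of the maps \<open>a \<mapsto> a\<cdot>T\<close>, \<open>a \<mapsto> T\<cdot>a\<close> from \<open>A\<close> to \<open>E = B(A, A')\<close>, and let
  \<open>B c b a = L a b c\<close> be the associated bilinear map; this is \<open>\<phi>\<^sub>r\<close>, respectively \<open>\<phi>\<^sub>l\<close>.
  A \<open>\<sigma>(A, A\<^sub>*)\<close>-continuous functional vanishes on the common kernel of finitely many
  elements of \<open>A\<^sub>*\<close>, hence lies in \<open>A\<^sub>*\<close>; so \<open>L\<close> is \<open>\<sigma>(A, A\<^sub>*)\<close>--\<open>\<sigma>(E, E')\<close>-continuous iff its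
  Banach adjoint \<open>L' : E' \<rightarrow> A'\<close> takes values in \<open>A\<^sub>*\<close>. Every value \<open>B c b\<close> is \<open>L'\<close> applied to
  an evaluation functional of norm at most \<open>\<parallel>b\<parallel> \<parallel>c\<parallel>\<close>.

  If \<open>L'\<close> maps into \<open>A\<^sub>*\<close>, it is continuous from \<open>\<sigma>(E', E)\<close> to \<open>\<sigma>(A', A'')\<close>, because elements of
  \<open>A''\<close> act on \<open>A\<^sub>*\<close> as evaluations at points of \<open>A\<close>. By Banach--Alaoglu the image of the unit
  ball of \<open>E'\<close> is then weakly compact; it is convex and contains all values of \<open>\<plusminus>B\<close> on the
  unit balls, so the weak closure of their convex hull is weakly compact. Conversely, if that
  weak closure \<open>K\<close> is weakly compact and the values lie in \<open>A\<^sub>*\<close>, then \<open>K \<subseteq> A\<^sub>*\<close> because closed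
  subspaces are weakly closed, \<open>K\<close> is weak-star closed, and the bipolar theorem puts \<open>L' \<psi>\<close>
  into the weak-star closure of the hull whenever \<open>\<parallel>\<psi>\<parallel> \<le> 1/2\<close>.

  Both separation theorems are derived from an algebraic Hahn--Banach theorem, applied to the
  infimal convolution of a seminorm with a convex cone.
\<close>

section \<open>Weak topologies\<close>

lemma topspace_weak_top [simp]: "F \<noteq> {} \<Longrightarrow> topspace (weak_top F) = UNIV"
  unfolding weak_top_def topology_generated_by_topspace
  by (auto intro!: exI[of _ UNIV])

lemma openin_weak_top_vimage: "g \<in> F \<Longrightarrow> open U \<Longrightarrow> openin (weak_top F) (g -` U)"
  unfolding weak_top_def openin_topology_generated_by_iff
  by (rule generate_topology_on.Basis) blast

lemma continuous_map_weak_top_generator: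
  assumes "g \<in> F"
  shows "continuous_map (weak_top F) euclideanreal g"
proof -
  have "F \<noteq> {}" using assms by auto
  then show ?thesis
    unfolding continuous_map_def using assms openin_weak_top_vimage[OF assms]
    by (auto simp: vimage_def)
qed

lemma continuous_map_into_weak_top:
  assumes "F \<noteq> {}" and "\<And>g. g \<in> F \<Longrightarrow> continuous_map X euclideanreal (g \<circ> f)"
  shows "continuous_map X (weak_top F) f"
  unfolding weak_top_def continuous_on_generated_topo_iff
proof (intro conjI allI impI)
  fix U assume "U \<in> {g -` V |g V. g \<in> F \<and> open V}"
  then obtain g V where U: "U = g -` V" "g \<in> F" "open V" by blast
  have "openin X {x \<in> topspace X. (g \<circ> f) x \<in> V}"
    by (rule openin_continuous_map_preimage[OF assms(2)[OF U(2)]]) (use U in simp)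
  moreover have "{x \<in> topspace X. (g \<circ> f) x \<in> V} = f -` U \<inter> topspace X"
    using U by auto
  ultimately show "openin X (f -` U \<inter> topspace X)" by simp
next
  obtain g where "g \<in> F" using assms(1) by auto
  then show "f ` topspace X \<subseteq> \<Union> {g -` V |g V. g \<in> F \<and> open V}"
    by (auto intro!: exI[of _ "g -` UNIV"])
qed

lemma openin_weak_top_contains_basic:
  assumes "openin (weak_top F) U" "x \<in> U"
  shows "\<exists>G e. finite G \<and> G \<subseteq> F \<and> 0 < e \<and> {y. \<forall>g\<in>G. \<bar>g y - g x\<bar> < e} \<subseteq> U"
proof -
  have "generate_topology_on {g -` V |g V. g \<in> F \<and> open V} U"
    using assms(1) unfolding weak_top_def openin_topology_generated_by_iff .
  then show ?thesis using assms(2)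
  proof (induction arbitrary: x)
    case Empty
    then show ?case by simp
  next
    case (Int U1 U2)
    from Int.prems have "x \<in> U1" "x \<in> U2" by auto
    obtain G1 e1 where
      G1: "finite G1" "G1 \<subseteq> F" "0 < e1" "{y. \<forall>g\<in>G1. \<bar>g y - g x\<bar> < e1} \<subseteq> U1"
      using Int.IH(1)[OF \<open>x \<in> U1\<close>] by blast
    obtain G2 e2 where
      G2: "finite G2" "G2 \<subseteq> F" "0 < e2" "{y. \<forall>g\<in>G2. \<bar>g y - g x\<bar> < e2} \<subseteq> U2"
      using Int.IH(2)[OF \<open>x \<in> U2\<close>] by blast
    have "{y. \<forall>g\<in>G1 \<union> G2. \<bar>g y - g x\<bar> < min e1 e2} \<subseteq> U1 \<inter> U2"
      using G1(4) G2(4) by auto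
    then show ?case
      using G1 G2 by (intro exI[of _ "G1 \<union> G2"] exI[of _ "min e1 e2"]) simp
  next
    case (UN \<U>)
    from UN.prems obtain U where U: "U \<in> \<U>" "x \<in> U" by blast
    obtain G e where G: "finite G" "G \<subseteq> F" "0 < e" "{y. \<forall>g\<in>G. \<bar>g y - g x\<bar> < e} \<subseteq> U"
      using UN.IH[OF U] by blast
    have "{y. \<forall>g\<in>G. \<bar>g y - g x\<bar> < e} \<subseteq> \<Union>\<U>"
      using G(4) U(1) by (rule subset_trans[OF _ Union_upper])
    then show ?case
      using G(1-3) by (intro exI[of _ G] exI[of _ e]) simp
  next
    case (Basis U)
    from Basis.hyps obtain g V where U: "U = g -` V" "g \<in> F" "open V" by blast
    with Basis.prems obtain e where "0 < e" "ball (g x) e \<subseteq> V"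
      by (auto simp: open_contains_ball)
    have "{y. \<forall>h\<in>{g}. \<bar>h y - h x\<bar> < e} \<subseteq> U"
    proof
      fix y assume "y \<in> {y. \<forall>h\<in>{g}. \<bar>h y - h x\<bar> < e}"
      then have "g y \<in> ball (g x) e" by (simp add: dist_real_def abs_minus_commute)
      then show "y \<in> U" using U \<open>ball (g x) e \<subseteq> V\<close> by auto
    qed
    then show ?case
      using U \<open>0 < e\<close> by (intro exI[of _ "{g}"] exI[of _ e]) simp
  qed
qed

lemma Hausdorff_space_weak_top:
  assumes "F \<noteq> {}" and separating: "\<And>x y. x \<noteq> y \<Longrightarrow> \<exists>g\<in>F. g x \<noteq> g y"
  shows "Hausdorff_space (weak_top F)"
  unfolding Hausdorff_space_def
proof (intro allI impI)
  fix x y assume "x \<in> topspace (weak_top F) \<and> y \<in> topspace (weak_top F) \<and> x \<noteq> y"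
  then obtain g where g: "g \<in> F" "g x \<noteq> g y" using separating by blast
  define r where "r = \<bar>g x - g y\<bar> / 2"
  have "ball (g x) r \<inter> ball (g y) r = {}"
    by (rule disjoint_ballI) (simp add: r_def dist_real_def)
  then have "disjnt (g -` ball (g x) r) (g -` ball (g y) r)"
    by (auto simp: disjnt_def)
  moreover have "0 < r" using g by (simp add: r_def)
  moreover have "openin (weak_top F) (g -` ball z r)" for z
    using g(1) by (rule openin_weak_top_vimage) simp
  ultimately show "\<exists>U V. openin (weak_top F) U \<and> openin (weak_top F) V \<and> x \<in> U \<and> y \<in> V \<and> disjnt U V"
    by (intro exI[of _ "g -` ball (g x) r"] exI[of _ "g -` ball (g y) r"]) simp
qed

lemma topspace_weak_top_full [simp]: "topspace weak_top_full = UNIV"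
  by (simp add: weak_top_full_def)

lemma continuous_map_weak_top_full_blinfun:
  "continuous_map weak_top_full euclideanreal (blinfun_apply \<psi>)"
  unfolding weak_top_full_def by (rule continuous_map_weak_top_generator) simp

lemma openin_weak_top_full_vimage:
  "open (U :: real set) \<Longrightarrow> openin weak_top_full (blinfun_apply \<psi> -` U)"
  unfolding weak_top_full_def by (rule openin_weak_top_vimage) simp_all

lemma continuous_map_into_weak_top_full:
  fixes f :: "'a \<Rightarrow> 'e::real_normed_vector"
  assumes "\<And>\<psi> :: 'e \<Rightarrow>\<^sub>L real. continuous_map X euclideanreal (\<lambda>x. \<psi> (f x))"
  shows "continuous_map X weak_top_full f"
  unfolding weak_top_full_def
  by (rule continuous_map_into_weak_top) (use assms in \<open>auto simp: comp_def\<close>)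

lemma kappa_apply [simp]: "blinfun_apply (kappa a) \<mu> = \<mu> a"
  unfolding kappa_def by (simp add: bounded_linear_Blinfun_apply blinfun.bounded_linear_left)

lemma Hausdorff_space_weak_top_full_dual:
  "Hausdorff_space (weak_top_full :: ('a::real_normed_vector \<Rightarrow>\<^sub>L real) topology)"
  unfolding weak_top_full_def
proof (rule Hausdorff_space_weak_top)
  fix x y :: "'a \<Rightarrow>\<^sub>L real" assume "x \<noteq> y"
  then obtain a where "x a \<noteq> y a" by (meson blinfun_eqI)
  then have "blinfun_apply (kappa a) x \<noteq> blinfun_apply (kappa a) y" by simp
  moreover have "blinfun_apply (kappa a) \<in> range blinfun_apply" by (rule rangeI)
  ultimately show "\<exists>g::('a \<Rightarrow>\<^sub>L real) \<Rightarrow> real\<in>range blinfun_apply. g x \<noteq> g y"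
    by (rule rev_bexI[rotated])
qed simp

definition weak_star_top :: "('a::real_normed_vector \<Rightarrow>\<^sub>L real) topology" where
  "weak_star_top = weak_top (range (\<lambda>x \<mu>. blinfun_apply \<mu> x))"

lemma topspace_weak_star_top [simp]: "topspace weak_star_top = UNIV"
  by (simp add: weak_star_top_def)

lemma continuous_map_weak_star_top_eval:
  "continuous_map weak_star_top euclideanreal (\<lambda>\<mu>. blinfun_apply \<mu> x)"
  unfolding weak_star_top_def by (rule continuous_map_weak_top_generator) simp

lemma continuous_map_into_weak_star_top:
  assumes "\<And>x. continuous_map X euclideanreal (\<lambda>y. blinfun_apply (f y) x)"
  shows "continuous_map X weak_star_top f"
  unfolding weak_star_top_def
  by (rule continuous_map_into_weak_top) (use assms in \<open>auto simp: comp_def\<close>)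

lemma Hausdorff_space_weak_star_top: "Hausdorff_space weak_star_top"
  unfolding weak_star_top_def
proof (rule Hausdorff_space_weak_top)
  fix \<mu> \<nu> :: "'a \<Rightarrow>\<^sub>L real" assume "\<mu> \<noteq> \<nu>"
  then obtain x where "\<mu> x \<noteq> \<nu> x" by (meson blinfun_eqI)
  then show "\<exists>g\<in>range (\<lambda>x \<mu>. blinfun_apply \<mu> x). g \<mu> \<noteq> g \<nu>" by auto
qed simp

lemma continuous_map_weak_top_full_weak_star_top:
  "continuous_map weak_top_full weak_star_top (\<lambda>\<mu>::'a::real_normed_vector \<Rightarrow>\<^sub>L real. \<mu>)"
proof (rule continuous_map_into_weak_star_top)
  fix x :: 'a
  have "blinfun_apply (kappa x) = (\<lambda>\<mu>. \<mu> x)" by (rule ext) simp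
  then show "continuous_map weak_top_full euclideanreal (\<lambda>\<mu>. blinfun_apply \<mu> x)"
    by (metis continuous_map_weak_top_full_blinfun)
qed

lemma weak_star_top_basic_nbhd:
  fixes \<mu> :: "'a::real_normed_vector \<Rightarrow>\<^sub>L real"
  assumes "openin weak_star_top U" "\<mu> \<in> U"
  obtains A e where "finite A" "0 < e" "{\<nu>. \<forall>x\<in>A. \<bar>blinfun_apply \<nu> x - \<mu> x\<bar> < e} \<subseteq> U"
proof -
  obtain G e where G: "finite G" "G \<subseteq> range (\<lambda>x \<mu>. blinfun_apply \<mu> x)" "0 < e"
      "{\<nu>. \<forall>g\<in>G. \<bar>g \<nu> - g \<mu>\<bar> < e} \<subseteq> U"
    using openin_weak_top_contains_basic[OF assms[unfolded weak_star_top_def]] by blast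
  moreover obtain A where "finite A" "G = (\<lambda>x \<mu>. blinfun_apply \<mu> x) ` A"
    using finite_subset_image[OF G(1,2)] by blast
  ultimately have "{\<nu>. \<forall>x\<in>A. \<bar>blinfun_apply \<nu> x - \<mu> x\<bar> < e} \<subseteq> U"
    by auto
  with \<open>finite A\<close> \<open>0 < e\<close> show thesis by (rule that)
qed

lemma kernel_subset_imp_linear_combination:
  fixes f :: "'v::real_vector \<Rightarrow> real" and g :: "'i \<Rightarrow> 'v \<Rightarrow> real"
  assumes "finite I" "linear f" "\<And>i. i \<in> I \<Longrightarrow> linear (g i)"
    and "\<And>x. (\<forall>i\<in>I. g i x = 0) \<Longrightarrow> f x = 0"
  shows "\<exists>c. \<forall>x. f x = (\<Sum>i\<in>I. c i * g i x)"
  using assms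
proof (induction I arbitrary: f rule: finite_induct)
  case empty
  then show ?case by simp
next
  case (insert i I)
  have lin_g: "linear (g j)" if "j \<in> insert i I" for j
    using insert.prems(2) that .
  show ?case
  proof (cases "\<forall>x. (\<forall>j\<in>I. g j x = 0) \<longrightarrow> g i x = 0")
    case True
    then obtain c where c: "\<forall>x. f x = (\<Sum>j\<in>I. c j * g j x)"
      using insert.IH[of f] insert.prems by auto
    have "f x = (\<Sum>j\<in>insert i I. (c(i := 0)) j * g j x)" for x
    proof -
      have "(\<Sum>j\<in>I. (c(i := 0)) j * g j x) = (\<Sum>j\<in>I. c j * g j x)"
        using insert.hyps(2) by (intro sum.cong) auto
      then show ?thesis
        using c insert.hyps by simp
    qed
    then show ?thesis by blast
  next
    case False
    then obtain x0 where x0: "\<forall>j\<in>I. g j x0 = 0" "g i x0 \<noteq> 0" by blast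
    \<comment> \<open>Subtracting \<open>f x1 * g i\<close> for a point \<open>x1\<close> with \<open>g i x1 = 1\<close> in the kernels of \<open>I\<close> reduces to \<open>I\<close>.\<close>
    define x1 where "x1 = x0 /\<^sub>R g i x0"
    have x1: "\<forall>j\<in>I. g j x1 = 0" "g i x1 = 1"
      using x0 lin_g by (auto simp: x1_def linear_scale)
    define h where "h x = f x - f x1 * g i x" for x
    have "linear h"
      using insert.prems(1) lin_g[of i]
      by (auto simp: h_def linear_iff algebra_simps)
    moreover have "h x = 0" if x: "\<forall>j\<in>I. g j x = 0" for x
    proof -
      define y where "y = x - g i x *\<^sub>R x1"
      have "\<forall>j\<in>insert i I. g j y = 0"
        using x x1 lin_g by (auto simp: y_def linear_diff linear_scale)
      then have "f y = 0" by (rule insert.prems(3))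
      then show "h x = 0"
        using insert.prems(1) by (simp add: h_def y_def linear_diff linear_scale)
    qed
    ultimately obtain c where c: "\<forall>x. h x = (\<Sum>j\<in>I. c j * g j x)"
      using insert.IH[of h] lin_g by blast
    have "f x = (\<Sum>j\<in>insert i I. (c(i := f x1)) j * g j x)" for x
    proof -
      have "(\<Sum>j\<in>I. (c(i := f x1)) j * g j x) = (\<Sum>j\<in>I. c j * g j x)"
        using insert.hyps(2) by (intro sum.cong) auto
      then show ?thesis
        using c[rule_format, of x] insert.hyps by (simp add: h_def)
    qed
    then show ?thesis by blast
  qed
qed

section \<open>The Hahn--Banach theorem\<close>

definition sublinear :: "('v::real_vector \<Rightarrow> real) \<Rightarrow> bool" where
  "sublinear p \<longleftrightarrow> (\<forall>x y. p (x + y) \<le> p x + p y) \<and> (\<forall>c x. 0 \<le> c \<longrightarrow> p (c *\<^sub>R x) = c * p x)"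

lemma sublinear_add_le: "sublinear p \<Longrightarrow> p (x + y) \<le> p x + p y"
  by (simp add: sublinear_def)

lemma sublinear_scaleR: "sublinear p \<Longrightarrow> 0 \<le> c \<Longrightarrow> p (c *\<^sub>R x) = c * p x"
  by (simp add: sublinear_def)

lemma sublinear_zero: "sublinear p \<Longrightarrow> p 0 = 0"
  using sublinear_scaleR[of p 0 0] by simp

lemma sublinear_neg_le: "sublinear p \<Longrightarrow> - p x \<le> p (- x)"
  using sublinear_add_le[of p x "- x"] sublinear_zero[of p] by simp

lemma linear_abs_le:
  fixes f :: "'a::real_vector \<Rightarrow> real"
  assumes "linear f" "\<And>x. f x \<le> q x" "\<And>x. q (- x) = q x"
  shows "\<bar>f x\<bar> \<le> q x"
proof -
  have "- f x \<le> q x"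
    using assms(2)[of "- x"] assms(3)[of x] linear_neg[OF assms(1)] by simp
  then show ?thesis using assms(2)[of x] by linarith
qed

text \<open>Partial linear functionals are handled through their graphs, so that Zorn's lemma applies
  to set inclusion. Single-valuedness is automatic: \<open>(0, y) \<in> H\<close> forces \<open>y \<le> p 0 = 0\<close> and \<open>- y \<le> 0\<close>.\<close>

definition dominated_graph :: "('v::real_vector \<Rightarrow> real) \<Rightarrow> ('v \<times> real) set \<Rightarrow> bool" where
  "dominated_graph p H \<longleftrightarrow> subspace H \<and> (\<forall>(x, y)\<in>H. y \<le> p x)"

lemma dominated_graph_single_valued:
  assumes p: "sublinear p" and H: "dominated_graph p H" and "(x, y) \<in> H" "(x, z) \<in> H"
  shows "y = z"
proof -
  have sH: "subspace H" and dom: "\<And>x y. (x, y) \<in> H \<Longrightarrow> y \<le> p x"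
    using H by (auto simp: dominated_graph_def)
  have "(0, y - z) \<in> H" "(0, z - y) \<in> H"
    using subspace_diff[OF sH assms(3,4)] subspace_diff[OF sH assms(4,3)] by simp_all
  then have "y - z \<le> 0" "z - y \<le> 0"
    using dom[of 0] sublinear_zero[OF p] by fastforce+
  then show ?thesis by simp
qed

lemma dominated_graph_Union_chain:
  assumes C: "C \<in> chains {H. dominated_graph p H}" and "C \<noteq> {}"
  shows "dominated_graph p (\<Union>C)"
proof -
  have graph: "dominated_graph p H" if "H \<in> C" for H
    using C that by (auto simp: chains_def)
  have common: "\<exists>H\<in>C. u \<in> H \<and> v \<in> H" if uv: "u \<in> \<Union>C" "v \<in> \<Union>C" for u v
  proof -
    obtain H1 H2 where "H1 \<in> C" "H2 \<in> C" "u \<in> H1" "v \<in> H2" using uv by blast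
    moreover have "H1 \<subseteq> H2 \<or> H2 \<subseteq> H1"
      using C \<open>H1 \<in> C\<close> \<open>H2 \<in> C\<close> by (auto simp: chains_def chain_subset_def)
    ultimately show ?thesis by blast
  qed
  have sub: "subspace H" if "H \<in> C" for H
    using graph[OF that] by (simp add: dominated_graph_def)
  have "subspace (\<Union>C)"
  proof (rule subspaceI)
    obtain H where "H \<in> C" using \<open>C \<noteq> {}\<close> by blast
    then have "0 \<in> H"
      using sub subspace_0 by blast
    then show "0 \<in> \<Union>C" using \<open>H \<in> C\<close> by blast
  next
    fix u v assume "u \<in> \<Union>C" "v \<in> \<Union>C"
    then obtain H where "H \<in> C" "u \<in> H" "v \<in> H" using common by blast
    then have "u + v \<in> H"
      using sub subspace_add by blast
    then show "u + v \<in> \<Union>C" using \<open>H \<in> C\<close> by blast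
  next
    fix c u assume "u \<in> \<Union>C"
    then obtain H where "H \<in> C" "u \<in> H" by blast
    then have "c *\<^sub>R u \<in> H"
      using sub subspace_scale by blast
    then show "c *\<^sub>R u \<in> \<Union>C" using \<open>H \<in> C\<close> by blast
  qed
  moreover have "\<forall>(x, y)\<in>\<Union>C. y \<le> p x"
    using graph by (auto simp: dominated_graph_def)
  ultimately show ?thesis by (simp add: dominated_graph_def)
qed

lemma dominated_graph_extension_le:
  assumes p: "sublinear p" and M: "dominated_graph p M"
    and lower: "\<And>x y. (x, y) \<in> M \<Longrightarrow> y - p (x - z) \<le> c"
    and upper: "\<And>x y. (x, y) \<in> M \<Longrightarrow> c \<le> p (x + z) - y"
    and xy: "(x, y) \<in> M"
  shows "y + t * c \<le> p (x + t *\<^sub>R z)"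
proof -
  have sM: "subspace M" and dom: "y \<le> p x"
    using M xy by (auto simp: dominated_graph_def)
  have scaled: "((1 / s) *\<^sub>R x, (1 / s) * y) \<in> M" for s
    using subspace_scale[OF sM xy, of "1 / s"] by simp
  consider "t = 0" | "0 < t" | "t < 0" by linarith
  then show ?thesis
  proof cases
    case 1
    then show ?thesis using dom by simp
  next
    case 2
    have "t * c \<le> t * (p ((1 / t) *\<^sub>R x + z) - (1 / t) * y)"
      using upper[OF scaled[of t]] 2 by (simp add: mult_left_mono)
    also have "\<dots> = t * p ((1 / t) *\<^sub>R x + z) - y"
      using 2 by (simp add: right_diff_distrib)
    also have "t * p ((1 / t) *\<^sub>R x + z) = p (t *\<^sub>R ((1 / t) *\<^sub>R x + z))"
      using 2 by (simp add: sublinear_scaleR[OF p])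
    also have "t *\<^sub>R ((1 / t) *\<^sub>R x + z) = x + t *\<^sub>R z"
      using 2 by (simp add: scaleR_add_right)
    finally show ?thesis by simp
  next
    case 3
    define s where "s = - t"
    have "0 < s" using 3 by (simp add: s_def)
    have "s * ((1 / s) * y - p ((1 / s) *\<^sub>R x - z)) \<le> s * c"
      using lower[OF scaled[of s]] \<open>0 < s\<close> by (simp add: mult_left_mono)
    moreover have "s * ((1 / s) * y - p ((1 / s) *\<^sub>R x - z)) = y - s * p ((1 / s) *\<^sub>R x - z)"
      using \<open>0 < s\<close> by (simp add: right_diff_distrib)
    moreover have "s * p ((1 / s) *\<^sub>R x - z) = p (s *\<^sub>R ((1 / s) *\<^sub>R x - z))"
      using \<open>0 < s\<close> by (simp add: sublinear_scaleR[OF p])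
    moreover have "s *\<^sub>R ((1 / s) *\<^sub>R x - z) = x + t *\<^sub>R z"
      using \<open>0 < s\<close> by (simp add: s_def scaleR_diff_right)
    ultimately show ?thesis by (simp add: s_def)
  qed
qed

lemma dominated_graph_extension_value:
  assumes p: "sublinear p" and M: "dominated_graph p M"
  obtains c where "\<And>x y. (x, y) \<in> M \<Longrightarrow> y - p (x - z) \<le> c"
    "\<And>x y. (x, y) \<in> M \<Longrightarrow> c \<le> p (x + z) - y"
proof -
  have sM: "subspace M" and dom: "\<And>x y. (x, y) \<in> M \<Longrightarrow> y \<le> p x"
    using M by (auto simp: dominated_graph_def)
  have M0: "(0, 0) \<in> M"
    using subspace_0[OF sM] by (simp add: zero_prod_def)
  have squeeze: "y - p (x - z) \<le> p (x' + z) - y'" if "(x, y) \<in> M" "(x', y') \<in> M" for x y x' y'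
  proof -
    have "y + y' \<le> p ((x - z) + (x' + z))"
      using dom subspace_add[OF sM that] by simp
    also have "\<dots> \<le> p (x - z) + p (x' + z)" by (rule sublinear_add_le[OF p])
    finally show ?thesis by simp
  qed
  define c where "c = (SUP (x, y)\<in>M. y - p (x - z))"
  have bdd: "bdd_above ((\<lambda>(x, y). y - p (x - z)) ` M)"
    using squeeze[OF _ M0] by (auto intro!: bdd_aboveI[where M = "p z"])
  show thesis
  proof (rule that)
    show "y - p (x - z) \<le> c" if "(x, y) \<in> M" for x y
      unfolding c_def using cSUP_upper[OF that bdd] by simp
    show "c \<le> p (x + z) - y" if "(x, y) \<in> M" for x y
      unfolding c_def using M0 squeeze[OF _ that] by (auto intro!: cSUP_least)
  qed
qed

lemma dominated_graph_extend:
  assumes p: "sublinear p" and M: "dominated_graph p M" and z: "z \<notin> fst ` M"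
  obtains M' where "dominated_graph p M'" "M \<subset> M'"
proof -
  obtain c where lower: "\<And>x y. (x, y) \<in> M \<Longrightarrow> y - p (x - z) \<le> c"
    and upper: "\<And>x y. (x, y) \<in> M \<Longrightarrow> c \<le> p (x + z) - y"
    using dominated_graph_extension_value[OF p M] by blast
  have sM: "subspace M" using M by (simp add: dominated_graph_def)
  define M' where "M' = {u + v | u v. u \<in> M \<and> v \<in> span {(z, c)}}"
  have "subspace M'"
    unfolding M'_def by (intro subspace_sums sM subspace_span)
  moreover have "\<forall>(x', y')\<in>M'. y' \<le> p x'"
  proof clarify
    fix x' y' assume "(x', y') \<in> M'"
    then obtain x y t where "(x, y) \<in> M" "x' = x + t *\<^sub>R z" "y' = y + t * c"
      by (auto simp: M'_def span_singleton)
    then show "y' \<le> p x'"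
      using dominated_graph_extension_le[OF p M lower upper] by simp
  qed
  ultimately have "dominated_graph p M'" by (simp add: dominated_graph_def)
  moreover have "M \<subseteq> M'"
  proof
    fix u assume "u \<in> M"
    moreover have "u = u + 0" by simp
    ultimately show "u \<in> M'" unfolding M'_def using span_zero by blast
  qed
  moreover have "(z, c) \<in> M'"
  proof -
    have "(z, c) = 0 + (z, c)" by simp
    then show ?thesis
      unfolding M'_def using subspace_0[OF sM] span_base[of "(z, c)" "{(z, c)}"] by blast
  qed
  moreover have "(z, c) \<notin> M" using z by force
  ultimately show thesis using that by blast
qed

lemma dominated_graph_total_imp_linear:
  assumes p: "sublinear p" and M: "dominated_graph p M" and total: "\<And>x. x \<in> fst ` M"
  shows "\<exists>f. linear f \<and> (\<forall>x. f x \<le> p x) \<and> (\<forall>(x, y)\<in>M. f x = y)"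
proof -
  have sM: "subspace M" using M by (simp add: dominated_graph_def)
  define f where "f x = (THE y. (x, y) \<in> M)" for x
  have fM: "(x, f x) \<in> M" for x
  proof -
    obtain y where xy: "(x, y) \<in> M" using total[of x] by force
    have "y' = y" if "(x, y') \<in> M" for y'
      using dominated_graph_single_valued[OF p M that xy] .
    with xy show ?thesis
      unfolding f_def by (rule theI)
  qed
  have f_eq: "f x = y" if "(x, y) \<in> M" for x y
    using dominated_graph_single_valued[OF p M fM that] .
  have "linear f"
  proof (rule linearI)
    show "f (x + y) = f x + f y" for x y
      using subspace_add[OF sM fM[of x] fM[of y]] by (intro f_eq) simp
    show "f (c *\<^sub>R x) = c *\<^sub>R f x" for c x
      using subspace_scale[OF sM fM[of x], of c] by (intro f_eq) simp
  qed
  moreover have "f x \<le> p x" for x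
    using M fM[of x] by (auto simp: dominated_graph_def)
  ultimately show ?thesis using f_eq by blast
qed

theorem hahn_banach_graph:
  assumes p: "sublinear p" and H0: "dominated_graph p H0"
  shows "\<exists>f. linear f \<and> (\<forall>x. f x \<le> p x) \<and> (\<forall>(x, y)\<in>H0. f x = y)"
proof -
  define \<H> where "\<H> = {H. dominated_graph p H \<and> H0 \<subseteq> H}"
  have "\<exists>U\<in>\<H>. \<forall>H\<in>C. H \<subseteq> U" if C: "C \<in> chains \<H>" for C
  proof (cases "C = {}")
    case True
    then show ?thesis using H0 by (auto simp: \<H>_def)
  next
    case False
    have "C \<subseteq> \<H>" using C by (simp add: chains_def)
    have "C \<in> chains {H. dominated_graph p H}"
      using C by (auto simp: chains_def \<H>_def)
    then have "dominated_graph p (\<Union>C)"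
      using False by (rule dominated_graph_Union_chain)
    moreover have "H0 \<subseteq> \<Union>C"
      using False \<open>C \<subseteq> \<H>\<close> by (auto simp: \<H>_def)
    ultimately have "\<Union>C \<in> \<H>" by (simp add: \<H>_def)
    then show ?thesis by blast
  qed
  then have "\<exists>M\<in>\<H>. \<forall>H\<in>\<H>. M \<subseteq> H \<longrightarrow> H = M"
    by (intro Zorn_Lemma2) blast
  then obtain M where "M \<in> \<H>" and maximal: "\<forall>H\<in>\<H>. M \<subseteq> H \<longrightarrow> H = M"
    by blast
  then have M: "dominated_graph p M" "H0 \<subseteq> M" by (simp_all add: \<H>_def)
  have "x \<in> fst ` M" for x
  proof (rule ccontr)
    assume "x \<notin> fst ` M"
    then obtain M' where M': "dominated_graph p M'" "M \<subset> M'"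
      by (rule dominated_graph_extend[OF p M(1)])
    then have "M' \<in> \<H>" using M(2) by (auto simp: \<H>_def)
    then have "M' = M" using maximal M'(2) by blast
    then show False using M'(2) by simp
  qed
  then obtain f where f: "linear f" "\<forall>x. f x \<le> p x" "\<forall>(x, y)\<in>M. f x = y"
    using dominated_graph_total_imp_linear[OF p M(1)] by blast
  have "\<forall>(x, y)\<in>H0. f x = y" using f(3) M(2) by auto
  with f(1,2) show ?thesis by blast
qed

corollary hahn_banach:
  assumes p: "sublinear p"
  obtains f where "linear f" "\<And>x. f x \<le> p x" "f z = p z"
proof -
  define H0 where "H0 = span {(z, p z)}"
  have "t * p z \<le> p (t *\<^sub>R z)" for t
  proof (cases "0 \<le> t")
    case True
    then show ?thesis by (simp add: sublinear_scaleR[OF p])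
  next
    case False
    have "t * p z = (- t) * (- p z)" by simp
    also have "\<dots> \<le> (- t) * p (- z)"
      using False sublinear_neg_le[OF p] by (intro mult_left_mono) auto
    also have "\<dots> = p (t *\<^sub>R z)"
      using False sublinear_scaleR[OF p, of "- t" "- z"] by simp
    finally show ?thesis .
  qed
  then have "\<forall>(x, y)\<in>H0. y \<le> p x"
    by (auto simp: H0_def span_singleton)
  then have "dominated_graph p H0"
    by (simp add: dominated_graph_def H0_def)
  moreover have "(z, p z) \<in> H0"
    unfolding H0_def by (rule span_base) simp
  ultimately show thesis
    using hahn_banach_graph[OF p] that by fastforce
qed

section \<open>Infimal convolution with a cone\<close>

text \<open>Reading a cone \<open>K \<subseteq> V \<times> \<real>\<close> as the epigraph of a sublinear functional \<open>q\<close>,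
  \<open>inf_conv \<nu> K\<close> is the infimal convolution of \<open>\<nu>\<close> and \<open>q\<close>.\<close>

definition inf_conv :: "('v::real_vector \<Rightarrow> real) \<Rightarrow> ('v \<times> real) set \<Rightarrow> 'v \<Rightarrow> real" where
  "inf_conv \<nu> K x = (INF (k, s)\<in>K. s + \<nu> (x - k))"

context
  fixes \<nu> :: "'v::real_vector \<Rightarrow> real" and K :: "('v \<times> real) set"
  assumes \<nu>: "sublinear \<nu>" and \<nu>_nonneg: "\<And>x. 0 \<le> \<nu> x"
    and K: "convex_cone K" and K_nonneg: "K \<subseteq> UNIV \<times> {0..}"
begin

lemma inf_conv_le:
  assumes "(k, s) \<in> K"
  shows "inf_conv \<nu> K x \<le> s + \<nu> (x - k)"
proof -
  have "bdd_below ((\<lambda>(k, s). s + \<nu> (x - k)) ` K)"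
    using K_nonneg by (intro bdd_belowI[of _ 0]) (auto intro!: add_nonneg_nonneg \<nu>_nonneg)
  from cINF_lower[OF this assms] show ?thesis
    by (simp add: inf_conv_def)
qed

lemma inf_conv_greatest:
  assumes "\<And>k s. (k, s) \<in> K \<Longrightarrow> r \<le> s + \<nu> (x - k)"
  shows "r \<le> inf_conv \<nu> K x"
proof -
  have "(0, 0) \<in> K"
    using convex_cone_contains_0[OF K] by (simp add: zero_prod_def)
  then show ?thesis
    unfolding inf_conv_def using assms by (auto intro: cINF_greatest)
qed

lemma inf_conv_add_le: "inf_conv \<nu> K (x + y) \<le> inf_conv \<nu> K x + inf_conv \<nu> K y"
proof -
  let ?p = "inf_conv \<nu> K"
  have "?p (x + y) \<le> (s1 + \<nu> (x - k1)) + (s2 + \<nu> (y - k2))"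
    if "(k1, s1) \<in> K" "(k2, s2) \<in> K" for k1 s1 k2 s2
  proof -
    have "(k1 + k2, s1 + s2) \<in> K"
      using convex_cone_add[OF K that] by simp
    then have "?p (x + y) \<le> (s1 + s2) + \<nu> ((x + y) - (k1 + k2))"
      by (rule inf_conv_le)
    also have "\<dots> = (s1 + s2) + \<nu> ((x - k1) + (y - k2))"
      by (simp add: algebra_simps)
    also have "\<dots> \<le> (s1 + \<nu> (x - k1)) + (s2 + \<nu> (y - k2))"
      using sublinear_add_le[OF \<nu>] by simp
    finally show ?thesis .
  qed
  then have "?p (x + y) - (s2 + \<nu> (y - k2)) \<le> ?p x" if "(k2, s2) \<in> K" for k2 s2
    using that by (intro inf_conv_greatest) (simp add: algebra_simps)
  then have "?p (x + y) - ?p x \<le> ?p y"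
    by (intro inf_conv_greatest) (simp add: algebra_simps)
  then show ?thesis by simp
qed

lemma inf_conv_scaleR_le:
  assumes "0 < c"
  shows "inf_conv \<nu> K (c *\<^sub>R x) \<le> c * inf_conv \<nu> K x"
proof -
  have "inf_conv \<nu> K (c *\<^sub>R x) / c \<le> s + \<nu> (x - k)" if "(k, s) \<in> K" for k s
  proof -
    have "(c *\<^sub>R k, c * s) \<in> K"
      using convex_cone_scaleR[OF K _ that, of c] assms by simp
    then have "inf_conv \<nu> K (c *\<^sub>R x) \<le> c * s + \<nu> (c *\<^sub>R (x - k))"
      using inf_conv_le by (simp add: scaleR_diff_right)
    also have "\<dots> = c * (s + \<nu> (x - k))"
      using assms by (simp add: sublinear_scaleR[OF \<nu>] distrib_left)
    finally show ?thesis
      using assms by (simp add: divide_le_eq mult.commute)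
  qed
  then have "inf_conv \<nu> K (c *\<^sub>R x) / c \<le> inf_conv \<nu> K x"
    by (rule inf_conv_greatest)
  then show ?thesis
    using assms by (simp add: divide_le_eq mult.commute)
qed

lemma sublinear_inf_conv: "sublinear (inf_conv \<nu> K)"
proof -
  let ?p = "inf_conv \<nu> K"
  have "?p (c *\<^sub>R x) = c * ?p x" if "0 \<le> c" for c x
  proof (cases "c = 0")
    case True
    have "(0, 0) \<in> K"
      using convex_cone_contains_0[OF K] by (simp add: zero_prod_def)
    then have "?p 0 \<le> 0"
      using inf_conv_le[of 0 0 0] sublinear_zero[OF \<nu>] by simp
    moreover have "0 \<le> ?p 0"
      using K_nonneg by (intro inf_conv_greatest) (auto intro!: add_nonneg_nonneg \<nu>_nonneg)
    ultimately show ?thesis using True by simp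
  next
    case False
    with that have "0 < c" by simp
    have "?p x = ?p ((1 / c) *\<^sub>R (c *\<^sub>R x))"
      using \<open>0 < c\<close> by simp
    also have "\<dots> \<le> (1 / c) * ?p (c *\<^sub>R x)"
      using \<open>0 < c\<close> by (intro inf_conv_scaleR_le) simp
    finally have "c * ?p x \<le> ?p (c *\<^sub>R x)"
      using \<open>0 < c\<close> by (simp add: field_simps)
    then show ?thesis
      using inf_conv_scaleR_le[OF \<open>0 < c\<close>, of x] by simp
  qed
  then show ?thesis by (simp add: sublinear_def inf_conv_add_le)
qed

lemma hahn_banach_inf_conv:
  obtains f where "linear f" "\<And>x. f x \<le> \<nu> x" "\<And>k s. (k, s) \<in> K \<Longrightarrow> f k \<le> s"
    "f z = inf_conv \<nu> K z"
proof -
  obtain f where f: "linear f" "\<And>x. f x \<le> inf_conv \<nu> K x" "f z = inf_conv \<nu> K z"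
    using hahn_banach[OF sublinear_inf_conv, where z = z] by blast
  have "(0, 0) \<in> K"
    using convex_cone_contains_0[OF K] by (simp add: zero_prod_def)
  then have "f x \<le> \<nu> x" for x
    using f(2)[of x] inf_conv_le[of 0 0 x] by simp
  moreover have "f k \<le> s" if "(k, s) \<in> K" for k s
    using f(2)[of k] inf_conv_le[OF that, of k] sublinear_zero[OF \<nu>] by simp
  ultimately show thesis
    using that f(1,3) by blast
qed

end

section \<open>Closed subspaces are weakly closed\<close>

lemma sublinear_norm: "sublinear norm"
  by (simp add: sublinear_def norm_triangle_ineq)

lemma separation_closed_subspace:
  fixes P :: "'a::real_normed_vector set"
  assumes P: "subspace P" "closed P" and "x \<notin> P"
  obtains f :: "'a \<Rightarrow>\<^sub>L real" where "\<And>q. q \<in> P \<Longrightarrow> f q = 0" "0 < f x"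
proof -
  define d where "d = infdist x P"
  have "P \<noteq> {}" using subspace_0[OF P(1)] by blast
  then have "0 < d"
    using in_closed_iff_infdist_zero[OF P(2)] \<open>x \<notin> P\<close> infdist_nonneg[of x P]
    by (simp add: d_def)
  define K where "K = P \<times> {0 :: real}"
  have "convex_cone P" "convex_cone {0 :: real}"
    using P(1) by (auto simp: convex_cone_iff subspace_add subspace_scale subspace_0)
  then have K: "convex_cone K"
    unfolding K_def by (rule convex_cone_Times)
  have K_nonneg: "K \<subseteq> UNIV \<times> {0..}" by (auto simp: K_def)
  obtain f where f: "linear f" "\<And>y. f y \<le> norm y" "\<And>k s. (k, s) \<in> K \<Longrightarrow> f k \<le> s"
      "f x = inf_conv norm K x"
    using hahn_banach_inf_conv[where \<nu> = norm and K = K and z = x,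
        OF sublinear_norm norm_ge_zero K K_nonneg] by blast
  have "d \<le> f x"
    unfolding f(4) d_def
    by (rule inf_conv_greatest[where \<nu> = norm and K = K, OF sublinear_norm norm_ge_zero K K_nonneg])
      (auto simp: K_def dist_norm[symmetric] intro: infdist_le)
  have f_P: "f q = 0" if "q \<in> P" for q
  proof -
    have "f q \<le> 0" "- f q \<le> 0"
      using f(3)[of q 0] f(3)[of "- q" 0] subspace_neg[OF P(1) that] that linear_neg[OF f(1)]
      by (simp_all add: K_def)
    then show ?thesis by simp
  qed
  have "\<bar>f y\<bar> \<le> norm y" for y
    using f(1,2) by (rule linear_abs_le) simp
  then have "bounded_linear f"
    using f(1) by (intro bounded_linear_intro[where K = 1]) (auto simp: linear_add linear_scale)
  then have "blinfun_apply (Blinfun f) = f"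
    by (rule bounded_linear_Blinfun_apply)
  then show thesis
    using that[of "Blinfun f"] f_P \<open>0 < d\<close> \<open>d \<le> f x\<close> by simp
qed

lemma closedin_weak_top_full_subspace:
  fixes P :: "'a::real_normed_vector set"
  assumes "subspace P" "closed P"
  shows "closedin weak_top_full P"
  unfolding closedin_def topspace_weak_top_full
proof (intro conjI)
  show "openin weak_top_full (UNIV - P)"
  proof (subst openin_subopen, intro ballI)
    fix x assume "x \<in> UNIV - P"
    then obtain f :: "'a \<Rightarrow>\<^sub>L real" where f: "\<And>q. q \<in> P \<Longrightarrow> f q = 0" "0 < f x"
      using separation_closed_subspace[OF assms] by blast
    have "openin weak_top_full (f -` {f x / 2<..})"
      by (rule openin_weak_top_full_vimage) simp
    moreover have "f -` {f x / 2<..} \<subseteq> UNIV - P"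
      using f by fastforce
    ultimately show "\<exists>T. openin weak_top_full T \<and> x \<in> T \<and> T \<subseteq> UNIV - P"
      using f(2) by (intro exI[of _ "f -` {f x / 2<..}"]) simp
  qed
qed simp

section \<open>The Banach--Alaoglu theorem\<close>

lemma compactin_linear_contractions:
  "compactin (product_topology (\<lambda>_. euclideanreal) UNIV)
     {h :: 'a::real_normed_vector \<Rightarrow> real. linear h \<and> (\<forall>x. \<bar>h x\<bar> \<le> norm x)}"
proof -
  let ?PT = "product_topology (\<lambda>_. euclideanreal) (UNIV :: 'a set)"
  have proj: "continuous_map ?PT euclideanreal (\<lambda>h. h x)" for x
    by (rule continuous_map_product_projection) simp
  have closed_eq: "closedin ?PT {h. a h = b h}"
    if "continuous_map ?PT euclideanreal a" "continuous_map ?PT euclideanreal b" for a b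
    using closedin_continuous_maps_eq[OF Hausdorff_space_euclidean that] by simp
  have eq: "{h. linear h \<and> (\<forall>x. \<bar>h x\<bar> \<le> norm x)} = PiE UNIV (\<lambda>x. cball 0 (norm x)) \<inter>
      ((\<Inter>(x, y). {h. h (x + y) = h x + h y}) \<inter> (\<Inter>(c, x). {h. h (c *\<^sub>R x) = c * h x}))"
    by (auto simp: linear_iff PiE_iff)
  show ?thesis
    unfolding eq
  proof (rule compact_Int_closedin)
    show "compactin ?PT (PiE UNIV (\<lambda>x. cball 0 (norm x)))"
      by (simp add: compactin_PiE)
    show "closedin ?PT ((\<Inter>(x, y). {h. h (x + y) = h x + h y}) \<inter>
        (\<Inter>(c, x). {h. h (c *\<^sub>R x) = c * h x}))"
      by (intro closedin_Int closedin_Inter) (auto intro!: closed_eq continuous_intros proj)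
  qed
qed

theorem banach_alaoglu: "compactin weak_star_top (cball (0 :: 'a::real_normed_vector \<Rightarrow>\<^sub>L real) 1)"
proof -
  let ?PT = "product_topology (\<lambda>_. euclideanreal) (UNIV :: 'a set)"
  define L where "L = {h :: 'a \<Rightarrow> real. linear h \<and> (\<forall>x. \<bar>h x\<bar> \<le> norm x)}"
  have bl: "bounded_linear h" if "h \<in> L" for h
    using that by (intro bounded_linear_intro[where K = 1]) (auto simp: L_def linear_add linear_scale)
  have "continuous_map (subtopology ?PT L) weak_star_top Blinfun"
  proof (rule continuous_map_into_weak_star_top)
    fix x :: 'a
    have "continuous_map (subtopology ?PT L) euclideanreal (\<lambda>h. h x)"
      by (intro continuous_map_from_subtopology continuous_map_product_projection) simp
    then show "continuous_map (subtopology ?PT L) euclideanreal (\<lambda>h. blinfun_apply (Blinfun h) x)"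
      by (rule continuous_map_eq) (simp add: bounded_linear_Blinfun_apply[OF bl])
  qed
  then have "compactin weak_star_top (Blinfun ` L)"
    using compactin_linear_contractions unfolding L_def
    by (intro image_compactin[of "subtopology ?PT L"]) (auto simp: compactin_subtopology L_def)
  moreover have "Blinfun ` L = cball 0 1"
  proof (intro equalityI subsetI)
    fix \<mu> assume "\<mu> \<in> Blinfun ` L"
    then obtain h where "h \<in> L" "\<mu> = Blinfun h" by blast
    then have "norm \<mu> \<le> 1"
      by (intro norm_blinfun_bound) (auto simp: bounded_linear_Blinfun_apply[OF bl] L_def)
    then show "\<mu> \<in> cball 0 1" by simp
  next
    fix \<mu> :: "'a \<Rightarrow>\<^sub>L real" assume "\<mu> \<in> cball 0 1"
    then have "\<bar>\<mu> x\<bar> \<le> norm x" for x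
      using norm_blinfun[of \<mu> x] mult_right_le_one_le[of "norm x" "norm \<mu>"]
      by (simp add: mult.commute)
    then have "blinfun_apply \<mu> \<in> L"
      by (simp add: L_def bounded_linear.linear[OF blinfun.bounded_linear_right])
    then show "\<mu> \<in> Blinfun ` L"
      by (metis blinfun_apply_inverse image_eqI)
  qed
  ultimately show ?thesis by simp
qed

section \<open>A bipolar theorem for the weak-star topology\<close>

lemma sublinear_sum_abs_eval:
  assumes "0 \<le> r"
  shows "sublinear (\<lambda>g :: 'a::real_normed_vector \<Rightarrow>\<^sub>L real. r * (\<Sum>x\<in>A. \<bar>g x\<bar>))"
  unfolding sublinear_def
proof (intro conjI allI impI)
  fix g h :: "'a \<Rightarrow>\<^sub>L real"
  have "(\<Sum>x\<in>A. \<bar>blinfun_apply (g + h) x\<bar>) \<le> (\<Sum>x\<in>A. \<bar>g x\<bar>) + (\<Sum>x\<in>A. \<bar>h x\<bar>)"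
    unfolding sum.distrib[symmetric] by (intro sum_mono) (simp add: blinfun.add_left abs_triangle_ineq)
  then show "r * (\<Sum>x\<in>A. \<bar>blinfun_apply (g + h) x\<bar>) \<le> r * (\<Sum>x\<in>A. \<bar>g x\<bar>) + r * (\<Sum>x\<in>A. \<bar>h x\<bar>)"
    using assms by (simp add: distrib_left[symmetric] mult_left_mono)
next
  fix c :: real and g :: "'a \<Rightarrow>\<^sub>L real" assume "0 \<le> c"
  then show "r * (\<Sum>x\<in>A. \<bar>blinfun_apply (c *\<^sub>R g) x\<bar>) = c * (r * (\<Sum>x\<in>A. \<bar>g x\<bar>))"
    by (simp add: blinfun.scaleR_left abs_mult sum_distrib_left[symmetric])
qed

lemma dual_functional_eq_evaluation:
  fixes f :: "('a::real_normed_vector \<Rightarrow>\<^sub>L real) \<Rightarrow> real"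
  assumes "linear f" "finite A"
    and kernel: "\<And>g. (\<forall>x\<in>A. blinfun_apply g x = 0) \<Longrightarrow> f g = 0"
  obtains a where "\<And>g. f g = blinfun_apply g a"
proof -
  obtain w where w: "\<And>g :: 'a \<Rightarrow>\<^sub>L real. f g = (\<Sum>x\<in>A. w x * g x)"
    using kernel_subset_imp_linear_combination[of A f "\<lambda>x g. blinfun_apply g x"] assms
    by (auto simp: bounded_linear.linear[OF blinfun.bounded_linear_left])
  have "f g = g (\<Sum>x\<in>A. w x *\<^sub>R x)" for g
    by (simp add: w blinfun.sum_right blinfun.scaleR_right)
  then show thesis by (rule that)
qed

lemma finite_weak_star_separation:
  fixes C :: "('a::real_normed_vector \<Rightarrow>\<^sub>L real) set" and G :: "'a \<Rightarrow>\<^sub>L real"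
  assumes C: "convex C" "0 \<in> C" and "finite A" "0 < e"
    and far: "\<And>c. c \<in> C \<Longrightarrow> \<exists>x\<in>A. e \<le> \<bar>c x - G x\<bar>"
  obtains a where "\<And>c. c \<in> C \<Longrightarrow> c a \<le> 1" "1 \<le> G a"
proof -
  define \<nu> where "\<nu> g = 1 / e * (\<Sum>x\<in>A. \<bar>blinfun_apply g x\<bar>)" for g :: "'a \<Rightarrow>\<^sub>L real"
  have \<nu>: "sublinear \<nu>"
    unfolding \<nu>_def using \<open>0 < e\<close> by (intro sublinear_sum_abs_eval) simp
  have \<nu>_nonneg: "0 \<le> \<nu> g" for g
    using \<open>0 < e\<close> by (simp add: \<nu>_def sum_nonneg)
  define K where "K = conic hull (C \<times> {1 :: real})"
  have K_iff: "(k, s) \<in> K \<longleftrightarrow> 0 \<le> s \<and> (\<exists>c\<in>C. k = s *\<^sub>R c)" for k s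
    by (auto simp: K_def conic_hull_explicit)
  have K: "convex_cone K"
    unfolding convex_cone_def K_def
    using C by (auto simp: convex_conic_hull convex_Times conic_conic_hull conic_hull_eq_empty)
  have K_nonneg: "K \<subseteq> UNIV \<times> {0..}"
    by (auto simp: K_iff)
  obtain f where f: "linear f" "\<And>g. f g \<le> \<nu> g" "\<And>k s. (k, s) \<in> K \<Longrightarrow> f k \<le> s"
      "f G = inf_conv \<nu> K G"
    using hahn_banach_inf_conv[where \<nu> = \<nu> and K = K and z = G, OF \<nu> \<nu>_nonneg K K_nonneg] by blast
  \<comment> \<open>For \<open>s < 1\<close> the point \<open>s *\<^sub>R c\<close> lies in \<open>C\<close>, as \<open>0 \<in> C\<close>, hence is \<open>\<nu>\<close>-far from \<open>G\<close>.\<close>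
  have "1 \<le> f G"
    unfolding f(4)
  proof (rule inf_conv_greatest[where \<nu> = \<nu> and K = K, OF \<nu> \<nu>_nonneg K K_nonneg])
    fix k s assume "(k, s) \<in> K"
    then obtain c where c: "c \<in> C" "0 \<le> s" "k = s *\<^sub>R c" by (auto simp: K_iff)
    show "1 \<le> s + \<nu> (G - k)"
    proof (cases "1 \<le> s")
      case True
      then show ?thesis using \<nu>_nonneg[of "G - k"] by simp
    next
      case False
      have "s *\<^sub>R c \<in> C"
        using convexD[OF C(1) c(1) C(2), of s "1 - s"] c(2) False by simp
      then obtain x where "x \<in> A" "e \<le> \<bar>k x - G x\<bar>"
        using far c(3) by auto
      then have "e \<le> (\<Sum>x\<in>A. \<bar>blinfun_apply (G - k) x\<bar>)"
        using member_le_sum[of x A "\<lambda>x. \<bar>blinfun_apply (G - k) x\<bar>"] \<open>finite A\<close>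
        by (simp add: blinfun.diff_left abs_minus_commute)
      then have "1 \<le> \<nu> (G - k)"
        using \<open>0 < e\<close> by (simp add: \<nu>_def)
      then show ?thesis using c(2) by simp
    qed
  qed
  have f_bound: "\<bar>f g\<bar> \<le> \<nu> g" for g
    using f(1,2) by (rule linear_abs_le) (simp add: \<nu>_def blinfun.minus_left)
  have "f g = 0" if "\<forall>x\<in>A. g x = 0" for g :: "'a \<Rightarrow>\<^sub>L real"
    using f_bound[of g] that by (simp add: \<nu>_def)
  then obtain a where a: "\<And>g. f g = g a"
    using dual_functional_eq_evaluation[OF f(1) \<open>finite A\<close>] by blast
  show thesis
  proof (rule that)
    show "c a \<le> 1" if "c \<in> C" for c
      using f(3)[of c 1] that by (simp add: K_iff a)
    show "1 \<le> G a"
      using \<open>1 \<le> f G\<close> by (simp add: a)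
  qed
qed

theorem in_weak_star_closure_of_convex:
  fixes C :: "('a::real_normed_vector \<Rightarrow>\<^sub>L real) set" and G :: "'a \<Rightarrow>\<^sub>L real"
  assumes "convex C" "0 \<in> C" and polar: "\<And>a. (\<forall>c\<in>C. c a \<le> 1) \<Longrightarrow> G a < 1"
  shows "G \<in> weak_star_top closure_of C"
  unfolding in_closure_of topspace_weak_star_top
proof (intro conjI allI impI UNIV_I)
  fix U assume "G \<in> U \<and> openin weak_star_top U"
  then have "openin weak_star_top U" "G \<in> U" by simp_all
  then obtain A e where "finite A" "0 < e" and nbhd: "{\<nu>. \<forall>x\<in>A. \<bar>blinfun_apply \<nu> x - G x\<bar> < e} \<subseteq> U"
    using weak_star_top_basic_nbhd by blast
  show "\<exists>c. c \<in> C \<and> c \<in> U"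
  proof (rule ccontr)
    assume "\<nexists>c. c \<in> C \<and> c \<in> U"
    then have "\<exists>x\<in>A. e \<le> \<bar>c x - G x\<bar>" if "c \<in> C" for c
      using nbhd that by (force simp: not_less)
    then obtain a where "\<And>c. c \<in> C \<Longrightarrow> c a \<le> 1" "1 \<le> G a"
      using finite_weak_star_separation[OF assms(1,2) \<open>finite A\<close> \<open>0 < e\<close>] by blast
    then show False using polar[of a] by fastforce
  qed
qed

section \<open>Weak-star continuity and the predual\<close>

lemma dual_banach_algebra_subspace: "dual_banach_algebra P \<Longrightarrow> subspace P"
  and dual_banach_algebra_closed: "dual_banach_algebra P \<Longrightarrow> closed P"
  by (simp_all add: dual_banach_algebra_def)

lemma dual_banach_algebra_representation:
  fixes \<Psi> :: "('a::{real_normed_algebra,banach} \<Rightarrow>\<^sub>L real) \<Rightarrow>\<^sub>L real"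
  assumes "dual_banach_algebra P"
  obtains a where "\<And>\<mu>. \<mu> \<in> P \<Longrightarrow> \<Psi> \<mu> = \<mu> a"
proof -
  have "\<forall>\<phi> :: ('a \<Rightarrow>\<^sub>L real) \<Rightarrow> real.
      (\<forall>x\<in>P. \<forall>y\<in>P. \<phi> (x + y) = \<phi> x + \<phi> y) \<and> (\<forall>c. \<forall>x\<in>P. \<phi> (c *\<^sub>R x) = c * \<phi> x) \<and>
      (\<exists>K. \<forall>x\<in>P. \<bar>\<phi> x\<bar> \<le> K * norm x) \<longrightarrow> (\<exists>a. \<forall>\<mu>\<in>P. \<phi> \<mu> = blinfun_apply \<mu> a)"
    using assms by (simp add: dual_banach_algebra_def)
  from this[rule_format, of "blinfun_apply \<Psi>"] have "\<exists>a. \<forall>\<mu>\<in>P. \<Psi> \<mu> = \<mu> a"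
    using norm_blinfun[of \<Psi>]
    by (auto simp: blinfun.add_right blinfun.scaleR_right intro!: exI[of _ "norm \<Psi>"])
  then show thesis using that by blast
qed

lemma topspace_weak_star_A [simp]: "subspace P \<Longrightarrow> topspace (weak_star_A P) = UNIV"
  unfolding weak_star_A_def by (rule topspace_weak_top) (use subspace_0 in blast)

lemma continuous_weak_star_A_imp_mem:
  fixes P :: "('a::real_normed_algebra \<Rightarrow>\<^sub>L real) set"
  assumes P: "subspace P" and cont: "continuous_map (weak_star_A P) euclideanreal (blinfun_apply h)"
  shows "h \<in> P"
proof -
  have "openin (weak_star_A P) {x \<in> topspace (weak_star_A P). h x \<in> {-1<..<1}}"
    using cont by (rule openin_continuous_map_preimage) simp
  moreover have "{x \<in> topspace (weak_star_A P). h x \<in> {-1<..<1}} = {x. \<bar>h x\<bar> < 1}"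
    using P by (auto simp: abs_less_iff)
  ultimately have "openin (weak_top (blinfun_apply ` P)) {x. \<bar>h x\<bar> < 1}"
    by (simp add: weak_star_A_def)
  then obtain G e where G: "finite G" "G \<subseteq> blinfun_apply ` P" "0 < e"
      and nbhd: "{y. \<forall>g\<in>G. \<bar>g y - g 0\<bar> < e} \<subseteq> {x. \<bar>h x\<bar> < 1}"
    using openin_weak_top_contains_basic[of _ _ 0] by force
  obtain Q where Q: "Q \<subseteq> P" "finite Q" "G = blinfun_apply ` Q"
    using finite_subset_image[OF G(1,2)] by blast
  have "h x = 0" if x: "\<forall>\<mu>\<in>Q. \<mu> x = 0" for x
  proof (rule ccontr)
    assume "h x \<noteq> 0"
    define t where "t = 2 / \<bar>h x\<bar>"
    have "t *\<^sub>R x \<in> {y. \<forall>g\<in>G. \<bar>g y - g 0\<bar> < e}"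
      using x G(3) by (auto simp: Q(3) blinfun.scaleR_right)
    then have "\<bar>h (t *\<^sub>R x)\<bar> < 1" using nbhd by blast
    moreover have "\<bar>h (t *\<^sub>R x)\<bar> = 2"
      using \<open>h x \<noteq> 0\<close> by (simp add: t_def blinfun.scaleR_right abs_mult)
    ultimately show False by simp
  qed
  then obtain w where w: "\<And>x. h x = (\<Sum>\<mu>\<in>Q. w \<mu> * blinfun_apply \<mu> x)"
    using kernel_subset_imp_linear_combination[of Q "blinfun_apply h" blinfun_apply] Q(2)
    by (auto simp: bounded_linear.linear[OF blinfun.bounded_linear_right])
  have "h = (\<Sum>\<mu>\<in>Q. w \<mu> *\<^sub>R \<mu>)"
    by (rule blinfun_eqI) (simp add: w blinfun.sum_left blinfun.scaleR_left)
  also have "\<dots> \<in> P"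
    using Q(1) by (intro subspace_sum[OF P] subspace_scale[OF P]) auto
  finally show ?thesis .
qed

definition dual_map :: "('a::real_normed_vector \<Rightarrow> 'e::real_normed_vector) \<Rightarrow> ('e \<Rightarrow>\<^sub>L real) \<Rightarrow> ('a \<Rightarrow>\<^sub>L real)" where
  "dual_map L \<psi> = Blinfun (\<lambda>a. \<psi> (L a))"

lemma dual_map_apply: "bounded_linear L \<Longrightarrow> blinfun_apply (dual_map L \<psi>) = (\<lambda>a. \<psi> (L a))"
  unfolding dual_map_def
  by (rule bounded_linear_Blinfun_apply) (rule bounded_linear_compose[OF blinfun.bounded_linear_right])

lemma linear_dual_map: "bounded_linear L \<Longrightarrow> linear (dual_map L)"
  by (rule linearI; rule blinfun_eqI) (simp_all add: dual_map_apply blinfun.add_left blinfun.scaleR_left)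

lemma continuous_weak_star_A_iff_dual_map:
  fixes L :: "'a::real_normed_algebra \<Rightarrow> 'e::real_normed_vector"
  assumes P: "subspace P" and L: "bounded_linear L"
  shows "continuous_map (weak_star_A P) weak_top_full L \<longleftrightarrow> range (dual_map L) \<subseteq> P"
proof
  assume cont: "continuous_map (weak_star_A P) weak_top_full L"
  show "range (dual_map L) \<subseteq> P"
  proof clarify
    fix \<psi> :: "'e \<Rightarrow>\<^sub>L real"
    have "continuous_map (weak_star_A P) euclideanreal (blinfun_apply \<psi> \<circ> L)"
      using cont continuous_map_weak_top_full_blinfun by (rule continuous_map_compose)
    then have "continuous_map (weak_star_A P) euclideanreal (blinfun_apply (dual_map L \<psi>))"
      by (simp add: comp_def dual_map_apply[OF L])
    then show "dual_map L \<psi> \<in> P"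
      by (rule continuous_weak_star_A_imp_mem[OF P])
  qed
next
  assume range: "range (dual_map L) \<subseteq> P"
  show "continuous_map (weak_star_A P) weak_top_full L"
  proof (rule continuous_map_into_weak_top_full)
    fix \<psi> :: "'e \<Rightarrow>\<^sub>L real"
    have "continuous_map (weak_star_A P) euclideanreal (blinfun_apply (dual_map L \<psi>))"
      unfolding weak_star_A_def by (rule continuous_map_weak_top_generator) (use range in blast)
    then show "continuous_map (weak_star_A P) euclideanreal (\<lambda>x. \<psi> (L x))"
      by (simp add: dual_map_apply[OF L] comp_def)
  qed
qed

text \<open>When \<open>L'\<close> takes values in the predual, it is continuous from \<open>\<sigma>(E', E)\<close> to
  \<open>\<sigma>(A', A'')\<close>, because every element of \<open>A''\<close> acts on the predual as evaluation at some \<open>a \<in> A\<close>.\<close>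

lemma continuous_map_dual_map:
  fixes L :: "'a::{real_normed_algebra,banach} \<Rightarrow> 'e::real_normed_vector"
  assumes P: "dual_banach_algebra P" and L: "bounded_linear L" and range: "range (dual_map L) \<subseteq> P"
  shows "continuous_map weak_star_top weak_top_full (dual_map L)"
proof (rule continuous_map_into_weak_top_full)
  fix \<Psi> :: "('a \<Rightarrow>\<^sub>L real) \<Rightarrow>\<^sub>L real"
  obtain a where a: "\<And>\<mu>. \<mu> \<in> P \<Longrightarrow> \<Psi> \<mu> = \<mu> a"
    using dual_banach_algebra_representation[OF P] by blast
  have "\<Psi> (dual_map L \<psi>) = \<psi> (L a)" for \<psi>
    using a[of "dual_map L \<psi>"] range by (auto simp: dual_map_apply[OF L])
  then show "continuous_map weak_star_top euclideanreal (\<lambda>\<psi>. \<Psi> (dual_map L \<psi>))"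
    using continuous_map_weak_star_top_eval by simp
qed

section \<open>Weak compactness of the associated bilinear map\<close>

lemma norm_blinfun_le_of_unit_ball:
  assumes "0 \<le> M" "\<And>x. norm x \<le> 1 \<Longrightarrow> norm (blinfun_apply f x) \<le> M"
  shows "norm f \<le> M"
proof (rule norm_blinfun_bound[OF assms(1)])
  fix x
  show "norm (f x) \<le> M * norm x"
  proof (cases "x = 0")
    case True
    then show ?thesis by simp
  next
    case False
    have "norm (f x) = norm x * norm (f (x /\<^sub>R norm x))"
      using False by (simp add: blinfun.scaleR_right)
    also have "\<dots> \<le> norm x * M"
      using False assms(2)[of "x /\<^sub>R norm x"] by (intro mult_left_mono) simp_all
    finally show ?thesis by (simp add: mult.commute)
  qed
qed

lemma norm_blinfun2_le:
  fixes S :: "'a::real_normed_vector \<Rightarrow>\<^sub>L ('b::real_normed_vector \<Rightarrow>\<^sub>L real)"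
  assumes "\<And>x y. norm x \<le> 1 \<Longrightarrow> norm y \<le> 1 \<Longrightarrow> \<bar>S x y\<bar> \<le> M"
  shows "norm S \<le> M"
proof -
  have "0 \<le> M" using assms[of 0 0] by simp
  then show ?thesis
    using assms by (intro norm_blinfun_le_of_unit_ball) simp_all
qed

definition eval2 :: "'a::real_normed_vector \<Rightarrow> 'b::real_normed_vector \<Rightarrow> ('a \<Rightarrow>\<^sub>L ('b \<Rightarrow>\<^sub>L real)) \<Rightarrow>\<^sub>L real" where
  "eval2 x y = Blinfun (\<lambda>S :: 'a \<Rightarrow>\<^sub>L ('b \<Rightarrow>\<^sub>L real). S x y)"

lemma eval2_apply [simp]: "blinfun_apply (eval2 x y) S = S x y"
  unfolding eval2_def
  by (subst bounded_linear_Blinfun_apply)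
    (auto intro: bounded_linear_compose[OF blinfun.bounded_linear_left blinfun.bounded_linear_left])

lemma norm_eval2_le: "norm (eval2 x y) \<le> norm x * norm y"
proof (rule norm_blinfun_bound)
  fix S :: "'a \<Rightarrow>\<^sub>L ('b \<Rightarrow>\<^sub>L real)"
  have "norm (S x y) \<le> norm (S x) * norm y" by (rule norm_blinfun)
  also have "\<dots> \<le> norm S * norm x * norm y"
    by (intro mult_right_mono norm_blinfun) simp
  finally show "norm (eval2 x y S) \<le> norm x * norm y * norm S"
    by (simp add: ac_simps)
qed simp

definition absconv_values :: "('a::real_normed_vector \<Rightarrow> 'a \<Rightarrow> 'x::real_normed_vector) \<Rightarrow> 'x set" where
  "absconv_values B =
     (let S = {B a b | a b. norm a \<le> 1 \<and> norm b \<le> 1} in convex hull (S \<union> uminus ` S))"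

lemma weakly_compact_bil_iff:
  "weakly_compact_bil B \<longleftrightarrow> compactin weak_top_full (weak_top_full closure_of absconv_values B)"
  by (simp add: weakly_compact_bil_def absconv_values_def Let_def)

lemma convex_absconv_values: "convex (absconv_values B)"
  by (simp add: absconv_values_def Let_def)

lemma absconv_values_mem:
  assumes "norm a \<le> 1" "norm b \<le> 1"
  shows "B a b \<in> absconv_values B" "- B a b \<in> absconv_values B"
proof -
  define S where "S = {B a b | a b. norm a \<le> 1 \<and> norm b \<le> 1}"
  have "B a b \<in> S" using assms by (auto simp: S_def)
  then have "B a b \<in> S \<union> uminus ` S" "- B a b \<in> S \<union> uminus ` S" by auto
  then show "B a b \<in> absconv_values B" "- B a b \<in> absconv_values B"
    unfolding absconv_values_def Let_def S_def[symmetric] by (auto intro: hull_inc)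
qed

lemma zero_in_absconv_values: "0 \<in> absconv_values B"
  using convexD[OF convex_absconv_values absconv_values_mem[of 0 0 B], of "1/2" "1/2"]
  by (simp add: scaleR_right_distrib[symmetric])

lemma absconv_values_subset:
  assumes "convex M" "\<And>a b. norm a \<le> 1 \<Longrightarrow> norm b \<le> 1 \<Longrightarrow> B a b \<in> M \<and> - B a b \<in> M"
  shows "absconv_values B \<subseteq> M"
  unfolding absconv_values_def Let_def
proof (rule hull_minimal)
  show "{B a b |a b. norm a \<le> 1 \<and> norm b \<le> 1} \<union> uminus ` {B a b |a b. norm a \<le> 1 \<and> norm b \<le> 1} \<subseteq> M"
    using assms(2) by auto
qed (rule assms(1))

lemma range_subset_subspace_if_ball:
  fixes f :: "'a::real_normed_vector \<Rightarrow> 'b::real_vector"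
  assumes P: "subspace P" and f: "linear f" and "0 < r"
    and ball: "\<And>x. norm x \<le> r \<Longrightarrow> f x \<in> P"
  shows "range f \<subseteq> P"
proof -
  have "f x \<in> P" for x
  proof -
    define t where "t = norm x / r + 1"
    have "0 < t" using \<open>0 < r\<close> by (simp add: t_def add_nonneg_pos)
    have "norm ((1 / t) *\<^sub>R x) \<le> r"
      using \<open>0 < r\<close> \<open>0 < t\<close> by (simp add: t_def field_simps)
    then have "t *\<^sub>R f ((1 / t) *\<^sub>R x) \<in> P"
      using ball subspace_scale[OF P] by blast
    then show "f x \<in> P"
      using \<open>0 < t\<close> by (simp add: linear_scale[OF f])
  qed
  then show ?thesis by blast
qed

context
  fixes P :: "('a::{real_normed_algebra,banach} \<Rightarrow>\<^sub>L real) set"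
    and L :: "'a \<Rightarrow> ('a \<Rightarrow>\<^sub>L ('a \<Rightarrow>\<^sub>L real))" and B :: "'a \<Rightarrow> 'a \<Rightarrow> ('a \<Rightarrow>\<^sub>L real)"
  assumes P: "dual_banach_algebra P" and L: "bounded_linear L"
    and B: "\<And>c b a. B c b a = L a b c"
begin

lemma B_eq_dual_map: "B c b = dual_map L (eval2 b c)"
  by (rule blinfun_eqI) (simp add: B dual_map_apply[OF L])

lemma weakly_compact_bil_if_range_dual_map:
  assumes range: "range (dual_map L) \<subseteq> P"
  shows "weakly_compact_bil B"
proof -
  define M where "M = dual_map L ` cball 0 1"
  have "compactin weak_top_full M"
    unfolding M_def
    using banach_alaoglu continuous_map_dual_map[OF P L range] by (rule image_compactin)
  moreover have "closedin weak_top_full M"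
    using Hausdorff_space_weak_top_full_dual \<open>compactin weak_top_full M\<close> by (rule compactin_imp_closedin)
  moreover have "absconv_values B \<subseteq> M"
  proof (rule absconv_values_subset)
    show "convex M"
      unfolding M_def by (rule convex_linear_image[OF linear_dual_map[OF L] convex_cball])
  next
    fix c b :: 'a assume "norm c \<le> 1" "norm b \<le> 1"
    then have "norm (eval2 b c) \<le> 1"
      using norm_eval2_le[of b c] mult_le_one[of "norm b" "norm c"] by simp
    moreover have "B c b = dual_map L (eval2 b c)" "- B c b = dual_map L (- eval2 b c)"
      using B_eq_dual_map linear_neg[OF linear_dual_map[OF L]] by simp_all
    ultimately show "B c b \<in> M \<and> - B c b \<in> M"
      unfolding M_def by auto
  qed
  then have "weak_top_full closure_of absconv_values B \<subseteq> M"
    using \<open>closedin weak_top_full M\<close> by (rule closure_of_minimal)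
  ultimately show ?thesis
    unfolding weakly_compact_bil_iff by (meson closed_compactin closedin_closure_of)
qed

lemma dual_map_in_weak_star_closure:
  assumes "norm \<psi> \<le> 1/2"
  shows "dual_map L \<psi> \<in> weak_star_top closure_of absconv_values B"
proof (rule in_weak_star_closure_of_convex[OF convex_absconv_values zero_in_absconv_values])
  fix a assume polar: "\<forall>c\<in>absconv_values B. c a \<le> 1"
  have "\<bar>L a b c\<bar> \<le> 1" if "norm b \<le> 1" "norm c \<le> 1" for b c
    using polar absconv_values_mem[OF that(2,1), of B] by (auto simp: B abs_le_iff blinfun.minus_left)
  then have "norm (L a) \<le> 1" by (rule norm_blinfun2_le)
  have "dual_map L \<psi> a = \<psi> (L a)" by (simp add: dual_map_apply[OF L])
  also have "\<dots> \<le> norm \<psi> * norm (L a)"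
    using norm_blinfun[of \<psi> "L a"] by simp
  also have "\<dots> \<le> 1/2 * 1"
    using assms \<open>norm (L a) \<le> 1\<close> by (intro mult_mono) simp_all
  finally show "dual_map L \<psi> a < 1" by simp
qed

lemma range_dual_map_if_weakly_compact_bil:
  assumes wc: "weakly_compact_bil B" and BP: "\<And>c b. B c b \<in> P"
  shows "range (dual_map L) \<subseteq> P"
proof -
  have sP: "subspace P" using P by (rule dual_banach_algebra_subspace)
  define K where "K = weak_top_full closure_of absconv_values B"
  have "absconv_values B \<subseteq> P"
    by (rule absconv_values_subset[OF subspace_imp_convex[OF sP]]) (simp add: BP subspace_neg[OF sP])
  then have "K \<subseteq> P"
    unfolding K_def
    by (rule closure_of_minimal[OF _ closedin_weak_top_full_subspace[OF sP dual_banach_algebra_closed[OF P]]])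
  have "compactin weak_star_top K"
    using image_compactin[OF wc[unfolded weakly_compact_bil_iff] continuous_map_weak_top_full_weak_star_top]
    by (simp add: K_def)
  then have "closedin weak_star_top K"
    by (rule compactin_imp_closedin[OF Hausdorff_space_weak_star_top])
  have "absconv_values B \<subseteq> K" unfolding K_def by (rule closure_of_subset) simp
  then have "weak_star_top closure_of absconv_values B \<subseteq> K"
    using \<open>closedin weak_star_top K\<close> by (rule closure_of_minimal)
  then show ?thesis
    using \<open>K \<subseteq> P\<close> dual_map_in_weak_star_closure
    by (intro range_subset_subspace_if_ball[OF sP linear_dual_map[OF L], of "1/2"]) auto
qed

lemma continuous_weak_star_A_iff_weakly_compact_bil:
  "continuous_map (weak_star_A P) weak_top_full L \<longleftrightarrow> weakly_compact_bil B \<and> (\<forall>c b. B c b \<in> P)"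
proof -
  have "range (dual_map L) \<subseteq> P \<longleftrightarrow> weakly_compact_bil B \<and> (\<forall>c b. B c b \<in> P)"
    using weakly_compact_bil_if_range_dual_map range_dual_map_if_weakly_compact_bil
    by (auto simp: B_eq_dual_map)
  then show ?thesis
    using continuous_weak_star_A_iff_dual_map[OF dual_banach_algebra_subspace[OF P] L] by simp
qed

end

lemma lact_dual_apply [simp]: "blinfun_apply (lact_dual a \<mu>) b = \<mu> (b * a)"
  unfolding lact_dual_def
  by (subst bounded_linear_Blinfun_apply)
    (auto intro: bounded_linear_compose[OF blinfun.bounded_linear_right bounded_linear_mult_left])

lemma ract_dual_apply [simp]: "blinfun_apply (ract_dual \<mu> a) b = \<mu> (a * b)"
  unfolding ract_dual_def
  by (subst bounded_linear_Blinfun_apply)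
    (auto intro: bounded_linear_compose[OF blinfun.bounded_linear_right bounded_linear_mult_right])

lemma lact_op_apply [simp]: "blinfun_apply (lact_op a T) c = T (c * a)"
  unfolding lact_op_def
  by (subst bounded_linear_Blinfun_apply)
    (auto intro: bounded_linear_compose[OF blinfun.bounded_linear_right bounded_linear_mult_left])

lemma norm_ract_dual_le: "norm (ract_dual \<mu> a) \<le> norm \<mu> * norm a"
proof (rule norm_blinfun_bound)
  fix b
  have "norm (\<mu> (a * b)) \<le> norm \<mu> * norm (a * b)" by (rule norm_blinfun)
  also have "\<dots> \<le> norm \<mu> * (norm a * norm b)" by (intro mult_left_mono norm_mult_ineq) simp
  finally show "norm (ract_dual \<mu> a b) \<le> norm \<mu> * norm a * norm b"
    by (simp add: mult.assoc)
qed simp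

lemma ract_op_apply [simp]: "blinfun_apply (ract_op T a) c = ract_dual (T c) a"
proof -
  have "bounded_linear (\<lambda>c. ract_dual (T c) a)"
  proof (rule bounded_linear_intro[where K = "norm T * norm a"])
    show "ract_dual (T (x + y)) a = ract_dual (T x) a + ract_dual (T y) a" for x y
      by (rule blinfun_eqI) (simp add: blinfun.add_right blinfun.add_left)
    show "ract_dual (T (r *\<^sub>R x)) a = r *\<^sub>R ract_dual (T x) a" for r x
      by (rule blinfun_eqI) (simp add: blinfun.scaleR_right blinfun.scaleR_left)
    show "norm (ract_dual (T x) a) \<le> norm x * (norm T * norm a)" for x
      using norm_ract_dual_le[of "T x" a] norm_blinfun[of T x]
        mult_right_mono[of "norm (T x)" "norm T * norm x" "norm a"]
      by (simp add: ac_simps)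
  qed
  then show ?thesis
    unfolding ract_op_def by (simp add: bounded_linear_Blinfun_apply)
qed

lemma bounded_linear_lact_op: "bounded_linear (\<lambda>a. lact_op a T)"
proof (rule bounded_linear_intro[where K = "norm T"])
  show "lact_op (x + y) T = lact_op x T + lact_op y T" for x y
    by (rule blinfun_eqI) (simp add: distrib_left blinfun.add_right blinfun.add_left)
  show "lact_op (r *\<^sub>R x) T = r *\<^sub>R lact_op x T" for r x
    by (rule blinfun_eqI) (simp add: blinfun.scaleR_right blinfun.scaleR_left)
  show "norm (lact_op x T) \<le> norm x * norm T" for x
  proof (rule norm_blinfun_bound)
    fix c
    have "norm (T (c * x)) \<le> norm T * norm (c * x)" by (rule norm_blinfun)
    also have "\<dots> \<le> norm T * (norm c * norm x)" by (intro mult_left_mono norm_mult_ineq) simp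
    finally show "norm (lact_op x T c) \<le> norm x * norm T * norm c"
      by (simp add: ac_simps)
  qed simp
qed

lemma bounded_linear_ract_op: "bounded_linear (ract_op T)"
proof (rule bounded_linear_intro[where K = "norm T"])
  show "ract_op T (x + y) = ract_op T x + ract_op T y" for x y
    by (intro blinfun_eqI) (simp add: distrib_right blinfun.add_right blinfun.add_left)
  show "ract_op T (r *\<^sub>R x) = r *\<^sub>R ract_op T x" for r x
    by (intro blinfun_eqI) (simp add: blinfun.scaleR_right blinfun.scaleR_left)
  show "norm (ract_op T x) \<le> norm x * norm T" for x
  proof (rule norm_blinfun_bound)
    fix c
    have "norm (ract_dual (T c) x) \<le> norm (T c) * norm x" by (rule norm_ract_dual_le)
    also have "\<dots> \<le> norm T * norm c * norm x" by (intro mult_right_mono norm_blinfun) simp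
    finally show "norm (ract_op T x c) \<le> norm x * norm T * norm c"
      by (simp add: ac_simps)
  qed simp
qed

lemma phi_r_apply: "blinfun_apply (phi_r T c b) a = T (b * a) c"
  by (simp add: phi_r_def adjoint_op_def)

lemma phi_l_apply: "blinfun_apply (phi_l T c b) a = T b (a * c)"
  by (simp add: phi_l_def)

theorem proposition3p2:
  fixes P :: "('a::{real_normed_algebra,banach} \<Rightarrow>\<^sub>L real) set"
    and T :: "'a \<Rightarrow>\<^sub>L ('a \<Rightarrow>\<^sub>L real)"
  assumes "dual_banach_algebra P"
  shows "T \<in> sigmaWC_op P \<longleftrightarrow>
           (weakly_compact_bil (phi_r T) \<and> weakly_compact_bil (phi_l T) \<and>
            (\<forall>a b. phi_r T a b \<in> P) \<and> (\<forall>a b. phi_l T a b \<in> P))"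
proof -
  have "continuous_map (weak_star_A P) weak_top_full (\<lambda>a. lact_op a T) \<longleftrightarrow>
      weakly_compact_bil (phi_r T) \<and> (\<forall>a b. phi_r T a b \<in> P)"
    using assms bounded_linear_lact_op
    by (rule continuous_weak_star_A_iff_weakly_compact_bil) (simp add: phi_r_apply)
  moreover have "continuous_map (weak_star_A P) weak_top_full (ract_op T) \<longleftrightarrow>
      weakly_compact_bil (phi_l T) \<and> (\<forall>a b. phi_l T a b \<in> P)"
    using assms bounded_linear_ract_op
    by (rule continuous_weak_star_A_iff_weakly_compact_bil) (simp add: phi_l_apply)
  ultimately show ?thesis
    unfolding sigmaWC_op_def by blast
qed

end
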